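(* Let $s\ge1$ and $0\le k\le s$. Then (1) $O(s,k)=\binom{2s-k-1}{k}(C_{s-k})^2$, and (2) $O(s,k)=\sum_{m=k}^{s}\binom{m}{k}E(s,m)$.
   Context: A $p$-string of length $s$ is a correctly matched string of $s$ pairs of parentheses; there are $C_s=\frac{1}{s+1}\binom{2s}{s}$ of them ($C_0=1$). Given $p$-strings $U$ (upper), $W$ (lower) of length $s$, the meander graph $\Gamma^1_{2s-1}$ is obtained by marking points $0,1,\dots,2s$ on the $x$-axis, taking the segment $[0,2s]$, joining points $a,b$ by an upper semicircle for each matched pair of $U$ at positions $a<b$ (positions $1,\dots,2s$), and points $a-1,b-1$ by a lower semicircle for each matched pair of $W$ at positions $a<b$; the vertices are $1,\dots,2s-1$. A pierced circle at position $i$ ($1\le i\le 2s-2$) is present if vertices $i,i+1$ are joined both by an upper and a lower semicircle. $E(s,k)$ is the number of pairs $(U,W)$ whose meander graph has exactly $k$ pierced circles. For the path graph $P_v$ with vertices $1,\dots,v$, $\mathcal{A}_v(k)$ denotes the set of ways to place $k$ pierced circles at positions in $\{1,\dots,v-1\}$ with no two sharing a vertex (positions pairwise differing by at least $2$). $O(s,k)$ is the number of triples $(A,P,Q)$ with $A\in\mathcal{A}_{2s-1}(k)$ and $P,Q$ $p$-strings of length $s-k$. *)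

theory Defs
  imports Main
begin

definition catalan :: "nat \<Rightarrow> nat" where
  "catalan s = (2 * s choose s) div (s + 1)"

text \<open>A parenthesis string is a bool list, True = '(' and False = ')'.
  height U j = (#opens - #closes) among the first j characters.\<close>
definition height :: "bool list \<Rightarrow> nat \<Rightarrow> int" where
  "height U j = (\<Sum>i<j. if U ! i then 1 else -1)"

definition pstring :: "nat \<Rightarrow> bool list \<Rightarrow> bool" where
  "pstring s U \<longleftrightarrow> length U = 2 * s \<and> (\<forall>j\<le>2 * s. height U j \<ge> 0) \<and> height U (2 * s) = 0"

definition pstrings :: "nat \<Rightarrow> bool list set" where
  "pstrings s = {U. pstring s U}"

text \<open>Positions a < b (1-indexed) form a matched pair of U: position a is '(' and b is its
  matching ')'.\<close>
definition matched :: "bool list \<Rightarrow> nat \<Rightarrow> nat \<Rightarrow> bool" where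
  "matched U a b \<longleftrightarrow> 1 \<le> a \<and> a < b \<and> b \<le> length U \<and> U ! (a - 1) \<and>
     height U b = height U (a - 1) \<and> (\<forall>c. a \<le> c \<and> c < b \<longrightarrow> height U c > height U (a - 1))"

text \<open>Pierced circle at position i of the meander graph of (U,W): vertices i, i+1 are joined
  by an upper semicircle (pair (i,i+1) of U) and a lower semicircle (pair (i+1,i+2) of W,
  drawn between points i and i+1).\<close>
definition pierced :: "nat \<Rightarrow> bool list \<Rightarrow> bool list \<Rightarrow> nat \<Rightarrow> bool" where
  "pierced s U W i \<longleftrightarrow> 1 \<le> i \<and> i \<le> 2 * s - 2 \<and> matched U i (i + 1) \<and> matched W (i + 1) (i + 2)"

definition num_pierced :: "nat \<Rightarrow> bool list \<Rightarrow> bool list \<Rightarrow> nat" where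
  "num_pierced s U W = card {i \<in> {1..2 * s - 2}. pierced s U W i}"

definition E_count :: "nat \<Rightarrow> nat \<Rightarrow> nat" where
  "E_count s k = card {(U, W). pstring s U \<and> pstring s W \<and> num_pierced s U W = k}"

text \<open>A_v(k): placements of k pierced circles at positions in {1..v-1}, no two sharing a vertex.\<close>
definition A_set :: "nat \<Rightarrow> nat \<Rightarrow> nat set set" where
  "A_set v k = {A. A \<subseteq> {1..v - 1} \<and> card A = k \<and>
      (\<forall>i\<in>A. \<forall>j\<in>A. i \<noteq> j \<longrightarrow> i + 2 \<le> j \<or> j + 2 \<le> i)}"

definition O_count :: "nat \<Rightarrow> nat \<Rightarrow> nat" where
  "O_count s k = card (A_set (2 * s - 1) k \<times> pstrings (s - k) \<times> pstrings (s - k))"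

end

theory Submission
  imports Defs
begin

text \<open>
  By definition O(s,k) = |A_{2s-1}(k)| C_{s-k}^2.  The sparse k-subsets of {1..n} satisfy
  Pascal's recurrence (split on whether n is used), so there are binom(n+1-k, k) of them, and
  Dyck words are counted by the reflection principle.

  For (2), count pairs (B, (U,W)) where B is a k-set of pierced positions of (U,W).  Grouping
  by (U,W) gives the sum of binom(m,k) E(s,m).  Grouping by B: a position i in B forces a
  peak "()" of U at i-1, i and of W at i, i+1; these k peaks are disjoint, and deleting them
  is a bijection onto Dyck words of semilength s-k, so every B in A_{2s-1}(k) contributes
  C_{s-k}^2.
\<close>

section \<open>Dyck words\<close>

definition step :: "bool \<Rightarrow> int" where
  "step b = (if b then 1 else -1)"

definition level :: "bool list \<Rightarrow> int" where
  "level xs = (\<Sum>x\<leftarrow>xs. step x)"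

definition dyck :: "bool list \<Rightarrow> bool" where
  "dyck xs \<longleftrightarrow> (\<forall>j. 0 \<le> level (take j xs)) \<and> level xs = 0"

lemma step_simps [simp]: "step True = 1" "step False = -1"
  by (simp_all add: step_def)

lemma level_simps [simp]:
  "level [] = 0" "level (x # xs) = step x + level xs" "level (xs @ ys) = level xs + level ys"
  by (simp_all add: level_def)

lemma level_take_Suc:
  "j < length xs \<Longrightarrow> level (take (Suc j) xs) = level (take j xs) + step (xs ! j)"
  by (simp add: take_Suc_conv_app_nth)

lemma height_eq_level_take: "j \<le> length xs \<Longrightarrow> height xs j = level (take j xs)"
  by (induction j) (simp_all add: height_def level_take_Suc step_def)

lemma pstring_iff_dyck: "pstring s U \<longleftrightarrow> length U = 2 * s \<and> dyck U"
proof -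
  have "(\<forall>j\<le>length U. 0 \<le> level (take j U)) \<longleftrightarrow> (\<forall>j. 0 \<le> level (take j U))"
    by (metis nat_le_linear take_all)
  then show ?thesis
    by (auto simp: pstring_def dyck_def height_eq_level_take)
qed

lemma all_take_append_iff:
  "(\<forall>j. P (take j (xs @ ys))) \<longleftrightarrow> (\<forall>j. P (take j xs)) \<and> (\<forall>j. P (xs @ take j ys))"
proof safe
  fix j assume all: "\<forall>j. P (take j (xs @ ys))"
  show "P (take j xs)"
    using all[rule_format, of "min j (length xs)"] by (simp add: min_def split: if_splits)
  show "P (xs @ take j ys)"
    using all[rule_format, of "length xs + j"] by simp
next
  fix j assume "\<forall>j. P (take j xs)" "\<forall>j. P (xs @ take j ys)"
  then show "P (take j (xs @ ys))"
    by (cases "j \<le> length xs") auto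
qed

lemma dyck_append_iff:
  "dyck (xs @ ys) \<longleftrightarrow>
     (\<forall>j. 0 \<le> level (take j xs)) \<and> (\<forall>j. 0 \<le> level xs + level (take j ys)) \<and> level xs + level ys = 0"
  unfolding dyck_def all_take_append_iff[of "\<lambda>zs. 0 \<le> level zs"] by simp

lemma dyck_insert_peak: "dyck (xs @ True # False # ys) \<longleftrightarrow> dyck (xs @ ys)"
proof -
  have peak: "(\<forall>j. 0 \<le> level xs + level (take j (True # False # ys))) \<longleftrightarrow>
        0 \<le> level xs \<and> (\<forall>j. 0 \<le> level xs + level (take j ys))" (is "?L \<longleftrightarrow> ?R")
  proof
    assume L: ?L
    have "0 \<le> level xs + level (take j ys)" for j
      using L[rule_format, of "Suc (Suc j)"] by simp
    then show ?R
      using L[rule_format, of 0] by simp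
  next
    assume ?R
    then show ?L by (auto simp: take_Cons split: nat.split)
  qed
  have "(\<forall>j. 0 \<le> level (take j xs)) \<Longrightarrow> 0 \<le> level xs"
    by (metis take_all_iff le_refl)
  then show ?thesis
    unfolding dyck_append_iff[of xs] dyck_append_iff[of xs ys] peak by auto
qed

section \<open>Counting Dyck words by reflection\<close>

lemma catalan_eq_diff: "catalan n = (2 * n choose n) - (2 * n choose Suc n)"
proof -
  have absorb: "(2 * n choose Suc n) * Suc n = (2 * n choose n) * n"
    by (metis add_diff_cancel_left' binomial_absorb_comp binomial_absorption mult.commute mult_2)
  have "((2 * n choose n) - (2 * n choose Suc n)) * Suc n = 2 * n choose n"
    by (simp only: diff_mult_distrib absorb) (simp add: algebra_simps)
  then show ?thesis
    unfolding catalan_def by (metis Suc_eq_plus1 div_mult_self_is_m zero_less_Suc)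
qed

lemma finite_bool_lists_length: "finite {xs :: bool list. length xs = n}"
  using finite_lists_length_eq[of "UNIV :: bool set"] by simp

lemma card_bool_lists_count_False:
  "card {xs :: bool list. length xs = n \<and> length (filter Not xs) = m} = n choose m"
proof -
  let ?falses = "\<lambda>xs. {i. i < n \<and> \<not> xs ! i}"
  have "bij_betw ?falses {xs. length xs = n \<and> length (filter Not xs) = m}
      {A. A \<subseteq> {..<n} \<and> card A = m}"
  proof (rule bij_betw_byWitness[where f' = "\<lambda>A. map (\<lambda>i. i \<notin> A) [0..<n]"])
    show "(\<lambda>A. map (\<lambda>i. i \<notin> A) [0..<n]) ` {A. A \<subseteq> {..<n} \<and> card A = m}
        \<subseteq> {xs. length xs = n \<and> length (filter Not xs) = m}"
    proof safe
      fix A :: "nat set" assume "A \<subseteq> {..<n}"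
      then have "{i. i < n \<and> \<not> map (\<lambda>i. i \<notin> A) [0..<n] ! i} = A" by auto
      then show "length (filter Not (map (\<lambda>i. i \<notin> A) [0..<n])) = card A"
        by (simp add: length_filter_conv_card)
    qed simp
  qed (auto simp: length_filter_conv_card intro: nth_equalityI)
  then show ?thesis
    by (simp add: bij_betw_same_card n_subsets)
qed

lemma level_eq_length_minus_count_False: "level xs = int (length xs) - 2 * int (length (filter Not xs))"
  by (induction xs) auto

lemma card_lists_level:
  "card {xs. length xs = n \<and> level xs = int n - 2 * int m} = n choose m"
proof -
  have "{xs. length xs = n \<and> level xs = int n - 2 * int m} =
      {xs. length xs = n \<and> length (filter Not xs) = m}"
    by (auto simp: level_eq_length_minus_count_False)
  then show ?thesis by (simp add: card_bool_lists_count_False)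
qed

definition dips :: "bool list \<Rightarrow> bool" where
  "dips xs \<longleftrightarrow> (\<exists>j. level (take j xs) = -1)"

lemma dips_iff_neg_prefix: "dips xs \<longleftrightarrow> (\<exists>j. level (take j xs) < 0)"
proof
  assume "\<exists>j. level (take j xs) < 0"
  then obtain j where "level (take j xs) < 0" by blast
  then show "dips xs"
  proof (induction j)
    case (Suc j)
    show ?case
    proof (cases "level (take j xs) < 0")
      case False
      with Suc.prems have "level (take (Suc j) xs) = -1"
        by (cases "j < length xs") (auto simp: level_take_Suc step_def)
      then show ?thesis by (auto simp: dips_def)
    qed (rule Suc.IH)
  qed simp
next
  assume "dips xs"
  then obtain j where "level (take j xs) = -1" by (auto simp: dips_def)
  then show "\<exists>j. level (take j xs) < 0" by (intro exI[of _ j]) simp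
qed

lemma dyck_iff_not_dips: "dyck xs \<longleftrightarrow> level xs = 0 \<and> \<not> dips xs"
  by (auto simp: dyck_def dips_iff_neg_prefix not_less)

definition first_dip :: "bool list \<Rightarrow> nat" where
  "first_dip xs = (LEAST j. level (take j xs) = -1)"

lemma first_dip:
  assumes "dips xs"
  shows "level (take (first_dip xs) xs) = -1" and "first_dip xs \<le> length xs"
    and "\<And>j. j < first_dip xs \<Longrightarrow> level (take j xs) \<noteq> -1"
proof -
  show hit: "level (take (first_dip xs) xs) = -1"
    using assms unfolding dips_def first_dip_def by (rule LeastI_ex)
  show "\<And>j. j < first_dip xs \<Longrightarrow> level (take j xs) \<noteq> -1"
    unfolding first_dip_def by (rule not_less_Least)
  then show "first_dip xs \<le> length xs"
    using hit by (metis not_le order.strict_implies_order take_all)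
qed

definition reflect :: "bool list \<Rightarrow> bool list" where
  "reflect xs = take (first_dip xs) xs @ map Not (drop (first_dip xs) xs)"

lemma level_map_Not: "level (map Not xs) = - level xs"
  by (induction xs) (auto simp: step_def)

lemma reflect:
  assumes "dips xs"
  shows "length (reflect xs) = length xs" and "level (reflect xs) = -2 - level xs"
    and "dips (reflect xs)" and "reflect (reflect xs) = xs"
proof -
  define j where "j = first_dip xs"
  note hit = first_dip[OF assms, folded j_def]
  have r: "reflect xs = take j xs @ map Not (drop j xs)"
    by (simp add: reflect_def j_def)
  show "length (reflect xs) = length xs"
    using r hit by simp
  have "level xs = level (take j xs) + level (drop j xs)"
    by (metis append_take_drop_id level_simps(3))
  then show "level (reflect xs) = -2 - level xs"
    using r hit by (simp add: level_map_Not)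
  have prefix: "take i (reflect xs) = take i xs" if "i \<le> j" for i
    using r hit that by simp
  then show "dips (reflect xs)"
    using hit(1) unfolding dips_def by (metis order_refl)
  have "first_dip (reflect xs) = j"
    unfolding first_dip_def
  proof (rule Least_equality)
    show "level (take j (reflect xs)) = -1"
      using hit prefix by simp
    show "j \<le> i" if "level (take i (reflect xs)) = -1" for i
      using that hit(3)[of i] prefix[of i] by fastforce
  qed
  then show "reflect (reflect xs) = xs"
    using r hit by (simp add: reflect_def comp_def)
qed

lemma bij_betw_reflect:
  "bij_betw reflect {xs. length xs = n \<and> level xs = l \<and> dips xs}
     {xs. length xs = n \<and> level xs = -2 - l \<and> dips xs}"
  by (rule bij_betw_byWitness[where f' = reflect]) (auto simp: reflect)

lemma card_pstrings: "card (pstrings n) = catalan n"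
proof -
  let ?lists = "\<lambda>l. {xs. length xs = 2 * n \<and> level xs = l}"
  have finite: "finite (?lists l)" for l
    by (rule finite_subset[OF _ finite_bool_lists_length]) auto
  have "pstrings n = ?lists 0 - {xs \<in> ?lists 0. dips xs}"
    by (auto simp: pstrings_def pstring_iff_dyck dyck_iff_not_dips)
  moreover have dips_subset: "{xs \<in> ?lists 0. dips xs} \<subseteq> ?lists 0"
    by blast
  ultimately have "card (pstrings n) = card (?lists 0) - card {xs \<in> ?lists 0. dips xs}"
    using card_Diff_subset[OF finite_subset[OF dips_subset finite] dips_subset] by (simp only:)
  also have "card {xs \<in> ?lists 0. dips xs} = card (?lists (-2))"
  proof -
    have "?lists (-2) = {xs. length xs = 2 * n \<and> level xs = -2 - 0 \<and> dips xs}"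
      by (auto simp: dips_iff_neg_prefix intro: exI[of _ "2 * n"])
    then show ?thesis
      using bij_betw_same_card[OF bij_betw_reflect[of "2 * n" 0]] by (simp add: conj_assoc)
  qed
  also have "card (?lists 0) = 2 * n choose n"
    using card_lists_level[of "2 * n" n] by simp
  also have "card (?lists (-2)) = 2 * n choose Suc n"
    using card_lists_level[of "2 * n" "Suc n"] by simp
  finally show ?thesis
    by (simp add: catalan_eq_diff)
qed

lemma finite_pstrings: "finite (pstrings s)"
  by (rule finite_subset[OF _ finite_bool_lists_length]) (auto simp: pstrings_def pstring_def)

section \<open>Deleting peaks\<close>

text \<open>Positions in \<open>peaks_at\<close> are 0-based list indices, unlike the 1-based positions of
  \<open>matched\<close> and \<open>pierced\<close>.\<close>
definition peaks_at :: "nat set \<Rightarrow> bool list \<Rightarrow> bool" where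
  "peaks_at D xs \<longleftrightarrow> (\<forall>d\<in>D. xs ! d \<and> \<not> xs ! Suc d)"

definition sparse :: "nat set \<Rightarrow> bool" where
  "sparse A \<longleftrightarrow> (\<forall>i\<in>A. \<forall>j\<in>A. i \<noteq> j \<longrightarrow> i + 2 \<le> j \<or> j + 2 \<le> i)"

lemma peaks_at_take_append:
  assumes "\<forall>e\<in>D. e + 2 \<le> d" and "d \<le> length xs"
  shows "peaks_at D (take d xs @ ys) \<longleftrightarrow> peaks_at D xs"
proof -
  have "(take d xs @ ys) ! i = xs ! i" if "i < d" for i
    using that assms(2) by (simp add: nth_append)
  then show ?thesis
    using assms(1) unfolding peaks_at_def by force
qed

lemma bij_betw_remove_peak:
  assumes "d + 2 \<le> 2 * s" and below: "\<forall>e\<in>D. e + 2 \<le> d"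
  shows "bij_betw (\<lambda>xs. take d xs @ drop (d + 2) xs)
    {xs. pstring s xs \<and> peaks_at (insert d D) xs} {ys. pstring (s - 1) ys \<and> peaks_at D ys}"
proof (rule bij_betw_byWitness[where f' = "\<lambda>ys. take d ys @ True # False # drop d ys"])
  have split: "xs = take d xs @ True # False # drop (d + 2) xs"
    if "pstring s xs" "peaks_at (insert d D) xs" for xs
  proof -
    have "d + 2 \<le> length xs" "xs ! d" "\<not> xs ! Suc d"
      using that assms(1) by (auto simp: pstring_def peaks_at_def)
    then have "drop d xs = True # False # drop (d + 2) xs"
      using Cons_nth_drop_Suc[of d xs] Cons_nth_drop_Suc[of "Suc d" xs] by simp
    then show ?thesis
      by (metis append_take_drop_id)
  qed
  show "\<forall>xs \<in> {xs. pstring s xs \<and> peaks_at (insert d D) xs}.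
      take d (take d xs @ drop (d + 2) xs) @ True # False # drop d (take d xs @ drop (d + 2) xs) = xs"
    using split assms(1) by (auto simp: pstring_def min_def)
  show "\<forall>ys \<in> {ys. pstring (s - 1) ys \<and> peaks_at D ys}.
      take d (take d ys @ True # False # drop d ys) @ drop (d + 2) (take d ys @ True # False # drop d ys) = ys"
    using assms(1) by (auto simp: pstring_def min_def)
  show "(\<lambda>xs. take d xs @ drop (d + 2) xs) ` {xs. pstring s xs \<and> peaks_at (insert d D) xs}
      \<subseteq> {ys. pstring (s - 1) ys \<and> peaks_at D ys}"
  proof clarify
    fix xs assume xs: "pstring s xs" "peaks_at (insert d D) xs"
    then have "dyck (take d xs @ drop (d + 2) xs)"
      using split dyck_insert_peak by (metis pstring_iff_dyck)
    moreover have "d + 2 \<le> length xs"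
      using xs assms(1) by (simp add: pstring_def)
    ultimately show "pstring (s - 1) (take d xs @ drop (d + 2) xs) \<and> peaks_at D (take d xs @ drop (d + 2) xs)"
      using xs peaks_at_take_append[OF below]
      by (simp add: pstring_iff_dyck peaks_at_def)
  qed
  show "(\<lambda>ys. take d ys @ True # False # drop d ys) ` {ys. pstring (s - 1) ys \<and> peaks_at D ys}
      \<subseteq> {xs. pstring s xs \<and> peaks_at (insert d D) xs}"
  proof clarify
    fix ys assume ys: "pstring (s - 1) ys" "peaks_at D ys"
    then have "d \<le> length ys"
      using assms(1) by (simp add: pstring_def)
    then show "pstring s (take d ys @ True # False # drop d ys) \<and>
        peaks_at (insert d D) (take d ys @ True # False # drop d ys)"
      using ys assms(1) peaks_at_take_append[OF below]
      by (auto simp: pstring_iff_dyck dyck_insert_peak peaks_at_def nth_append)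
  qed
qed

lemma card_pstrings_peaks_at:
  assumes "finite D" and "sparse D" and "\<forall>d\<in>D. d + 2 \<le> 2 * s"
  shows "card {xs. pstring s xs \<and> peaks_at D xs} = catalan (s - card D)"
  using assms
proof (induction D arbitrary: s rule: finite_linorder_max_induct)
  case empty
  then show ?case
    by (simp add: peaks_at_def card_pstrings flip: pstrings_def)
next
  case (insert d D)
  have below: "\<forall>e\<in>D. e + 2 \<le> d"
    using insert.hyps(2) insert.prems(1) unfolding sparse_def by fastforce
  have "card {xs. pstring s xs \<and> peaks_at (insert d D) xs} = card {ys. pstring (s - 1) ys \<and> peaks_at D ys}"
    using insert.prems(2) by (intro bij_betw_same_card[OF bij_betw_remove_peak[OF _ below]]) simp
  also have "\<dots> = catalan (s - 1 - card D)"
    using insert.prems below by (intro insert.IH) (auto simp: sparse_def)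
  finally show ?case
    using insert.hyps by auto
qed

section \<open>Sparse position sets\<close>

lemma A_set_iff: "A \<in> A_set v k \<longleftrightarrow> A \<subseteq> {1..v - 1} \<and> card A = k \<and> sparse A"
  by (simp add: A_set_def sparse_def)

lemma finite_A_set: "finite (A_set v k)"
  unfolding A_set_def by (rule finite_subset[of _ "Pow {1..v - 1}"]) auto

lemma A_set_0: "A_set v 0 = {{}}"
proof -
  have "A = {}" if "A \<subseteq> {1..v - 1}" "card A = 0" for A :: "nat set"
    using that finite_subset[OF that(1)] by simp
  then show ?thesis by (auto simp: A_set_iff sparse_def) blast
qed

lemma A_set_le_1: "v \<le> 1 \<Longrightarrow> A_set v k = (if k = 0 then {{}} else {})"
  by (auto simp: A_set_0) (auto simp: A_set_iff)

lemma A_set_Suc_Suc: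
  "A_set (Suc (Suc n)) (Suc k) = A_set (Suc n) (Suc k) \<union> insert (Suc n) ` A_set n k"
proof (intro equalityI subsetI)
  fix A assume A: "A \<in> A_set (Suc (Suc n)) (Suc k)"
  show "A \<in> A_set (Suc n) (Suc k) \<union> insert (Suc n) ` A_set n k"
  proof (cases "Suc n \<in> A")
    case False
    then show ?thesis
      using A by (auto simp: A_set_iff le_Suc_eq)
  next
    case True
    have "A - {Suc n} \<subseteq> {1..n - 1}"
      using A True unfolding A_set_iff sparse_def by fastforce
    moreover have "finite A"
      using A by (auto simp: A_set_iff intro: finite_subset)
    ultimately have "A - {Suc n} \<in> A_set n k"
      using A True by (auto simp: A_set_iff sparse_def)
    then show ?thesis
      using True by (auto intro: rev_image_eqI)
  qed
next
  fix A assume "A \<in> A_set (Suc n) (Suc k) \<union> insert (Suc n) ` A_set n k"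
  then show "A \<in> A_set (Suc (Suc n)) (Suc k)"
  proof
    assume "A \<in> insert (Suc n) ` A_set n k"
    then obtain B where B: "B \<in> A_set n k" "A = insert (Suc n) B" by blast
    then have "finite B" "Suc n \<notin> B"
      by (auto simp: A_set_iff intro: finite_subset)
    then show ?thesis
      using B by (fastforce simp: A_set_iff sparse_def)
  qed (auto simp: A_set_iff)
qed

lemma card_A_set: "card (A_set v k) = (v - k) choose k"
proof (induction v arbitrary: k rule: induct_nat_012)
  case 0
  show ?case by (simp add: A_set_le_1)
next
  case 1
  show ?case by (simp add: A_set_le_1)
next
  case (ge2 n)
  show ?case
  proof (cases k)
    case 0
    then show ?thesis by (simp add: A_set_0)
  next
    case (Suc k')
    have fresh: "Suc n \<notin> B" if "B \<in> A_set n k'" for B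
      using that by (auto simp: A_set_iff)
    then have "inj_on (insert (Suc n)) (A_set n k')"
      by (meson inj_onI insert_ident)
    then have "card (insert (Suc n) ` A_set n k') = card (A_set n k')"
      by (rule card_image)
    moreover have "A_set (Suc n) k \<inter> insert (Suc n) ` A_set n k' = {}"
      by (auto simp: A_set_iff)
    ultimately have "card (A_set (Suc (Suc n)) k) = card (A_set (Suc n) k) + card (A_set n k')"
      unfolding Suc A_set_Suc_Suc by (simp add: card_Un_disjoint finite_A_set)
    also have "\<dots> = (Suc n - k choose k) + (n - k' choose k')"
      using ge2.IH by simp
    also have "\<dots> = Suc (Suc n) - k choose k"
      using Suc by (cases "k' \<le> n") (simp_all add: Suc_diff_le)
    finally show ?thesis .
  qed
qed

lemma A_set_nonempty_imp_le: "A_set v m \<noteq> {} \<Longrightarrow> 2 * m \<le> v"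
proof -
  assume "A_set v m \<noteq> {}"
  then have "card (A_set v m) \<noteq> 0"
    by (simp add: finite_A_set)
  then have "m \<le> v - m"
    by (simp add: card_A_set)
  then show "2 * m \<le> v"
    by linarith
qed

lemma card_A_set_subsets:
  assumes "P \<in> A_set v m"
  shows "card {B \<in> A_set v k. B \<subseteq> P} = m choose k"
proof -
  have "{B \<in> A_set v k. B \<subseteq> P} = {B. B \<subseteq> P \<and> card B = k}"
    using assms by (auto simp: A_set_iff sparse_def)
  moreover have "finite P"
    using assms by (auto simp: A_set_iff intro: finite_subset)
  ultimately show ?thesis
    using assms by (simp add: n_subsets A_set_iff)
qed

section \<open>Pierced circles\<close>

lemma matched_adjacent_iff:
  assumes "1 \<le> a" and "a < length U"
  shows "matched U a (Suc a) \<longleftrightarrow> peaks_at {a - 1} U"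
proof -
  obtain b where b: "a = Suc b"
    using assms(1) by (cases a) auto
  have "(\<forall>c. a \<le> c \<and> c < Suc a \<longrightarrow> height U c > height U b) \<longleftrightarrow> height U a > height U b"
    by (auto simp: b less_Suc_eq)
  then show ?thesis
    using assms unfolding matched_def peaks_at_def b by (auto simp: height_def)
qed

definition pierced_positions :: "nat \<Rightarrow> bool list \<Rightarrow> bool list \<Rightarrow> nat set" where
  "pierced_positions s U W = {i \<in> {1..2 * s - 2}. pierced s U W i}"

lemma num_pierced_eq_card: "num_pierced s U W = card (pierced_positions s U W)"
  by (simp add: num_pierced_def pierced_positions_def)

lemma pierced_iff_peaks_at:
  assumes "length U = 2 * s" and "length W = 2 * s"
  shows "pierced s U W i \<longleftrightarrow> i \<in> {1..2 * s - 2} \<and> peaks_at {i - 1} U \<and> peaks_at {i} W"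
  using assms matched_adjacent_iff[of i U] matched_adjacent_iff[of "Suc i" W]
  by (auto simp: pierced_def)

lemma pierced_positions_in_A_set:
  assumes "pstring s U" and "pstring s W"
  shows "pierced_positions s U W \<in> A_set (2 * s - 1) (num_pierced s U W)"
proof -
  have len: "length U = 2 * s" "length W = 2 * s"
    using assms by (auto simp: pstring_def)
  have no_adjacent: "Suc i \<notin> pierced_positions s U W" if "i \<in> pierced_positions s U W" for i
    using that by (auto simp: pierced_positions_def pierced_iff_peaks_at[OF len] peaks_at_def)
  have "sparse (pierced_positions s U W)"
    unfolding sparse_def
  proof (intro ballI impI)
    fix i j assume ij: "i \<in> pierced_positions s U W" "j \<in> pierced_positions s U W" "i \<noteq> j"
    show "i + 2 \<le> j \<or> j + 2 \<le> i"
    proof (rule ccontr)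
      assume "\<not> (i + 2 \<le> j \<or> j + 2 \<le> i)"
      then have "j = Suc i \<or> i = Suc j"
        using ij(3) by linarith
      then show False
        using ij no_adjacent by blast
    qed
  qed
  then show ?thesis
    by (auto simp: A_set_iff num_pierced_eq_card pierced_positions_def)
qed

lemma card_pstring_pairs_pierced_at:
  assumes "B \<in> A_set (2 * s - 1) k"
  shows "card {(U, W). pstring s U \<and> pstring s W \<and> B \<subseteq> pierced_positions s U W} = (catalan (s - k))\<^sup>2"
proof -
  have B: "B \<subseteq> {1..2 * s - 2}" "card B = k" "sparse B"
    using assms unfolding A_set_iff by (simp_all add: diff_diff_left numeral_2_eq_2)
  then have "finite B"
    using finite_subset by blast
  define D where "D = (\<lambda>i. i - 1) ` B"
  have range: "1 \<le> i \<and> i \<le> 2 * s - 2" if "i \<in> B" for i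
    using that B(1) by auto
  have room: "i - 1 + 2 \<le> 2 * s" "i + 2 \<le> 2 * s" if "i \<in> B" for i
    using range[OF that] by linarith+
  have "inj_on (\<lambda>i. i - 1) B"
    using range
    by (intro inj_onI) (metis le_add_diff_inverse2)
  then have "card D = k"
    using B(2) by (simp add: D_def card_image)
  have "sparse D"
    using B(1,3) unfolding sparse_def D_def by (fastforce dest!: bspec)
  have "{(U, W). pstring s U \<and> pstring s W \<and> B \<subseteq> pierced_positions s U W} =
      {U. pstring s U \<and> peaks_at D U} \<times> {W. pstring s W \<and> peaks_at B W}"
    using range by (auto simp: pierced_positions_def pierced_iff_peaks_at pstring_def D_def peaks_at_def)
  moreover have "card {U. pstring s U \<and> peaks_at D U} = catalan (s - k)"
    using \<open>finite B\<close> \<open>sparse D\<close> \<open>card D = k\<close> room by (simp add: D_def card_pstrings_peaks_at)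
  moreover have "card {W. pstring s W \<and> peaks_at B W} = catalan (s - k)"
    using \<open>finite B\<close> B(2,3) room by (simp add: card_pstrings_peaks_at)
  ultimately show ?thesis
    by (simp add: card_cartesian_product power2_eq_square)
qed

section \<open>Double counting\<close>

lemma sum_mult_card_fibres:
  assumes "finite X" and "finite M" and "f ` X \<subseteq> M"
  shows "(\<Sum>m\<in>M. g m * card {x \<in> X. f x = m}) = (\<Sum>x\<in>X. g (f x))"
proof -
  have "(\<Sum>m\<in>M. g m * card {x \<in> X. f x = m}) = (\<Sum>m\<in>M. \<Sum>x \<in> {x \<in> X. f x = m}. g (f x))"
    by (intro sum.cong) auto
  also have "\<dots> = (\<Sum>x\<in>X. g (f x))"
    using assms by (rule sum.group)
  finally show ?thesis .
qed

lemma O_count_eq: "O_count s k = card (A_set (2 * s - 1) k) * (catalan (s - k))\<^sup>2"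
  by (simp add: O_count_def card_cartesian_product card_pstrings power2_eq_square)

lemma O_count_eq_sum_E_count: "O_count s k = (\<Sum>m = k..s. (m choose k) * E_count s m)"
proof -
  let ?P = "pstrings s \<times> pstrings s"
  let ?A = "A_set (2 * s - 1) k"
  let ?pierced = "\<lambda>x. pierced_positions s (fst x) (snd x)"
  let ?num = "\<lambda>x. num_pierced s (fst x) (snd x)"
  have E: "E_count s m = card {x \<in> ?P. ?num x = m}" for m
    unfolding E_count_def by (rule arg_cong[where f = card]) (auto simp: pstrings_def)
  have in_A_set: "?pierced x \<in> A_set (2 * s - 1) (?num x)" if "x \<in> ?P" for x
    using that pierced_positions_in_A_set by (auto simp: pstrings_def)
  then have bound: "?num ` ?P \<subseteq> {..s}"
    using A_set_nonempty_imp_le by fastforce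
  have "(\<Sum>m = k..s. (m choose k) * E_count s m) = (\<Sum>m\<le>s. (m choose k) * E_count s m)"
    by (rule sum.mono_neutral_left) auto
  also have "\<dots> = (\<Sum>x\<in>?P. ?num x choose k)"
    unfolding E using finite_pstrings bound by (intro sum_mult_card_fibres) auto
  also have "\<dots> = (\<Sum>x\<in>?P. card {B \<in> ?A. B \<subseteq> ?pierced x})"
    using card_A_set_subsets[OF in_A_set] by (intro sum.cong) auto
  also have "\<dots> = (catalan (s - k))\<^sup>2 * card ?A"
  proof (rule sum_multicount)
    show "\<forall>B\<in>?A. card {x \<in> ?P. B \<subseteq> ?pierced x} = (catalan (s - k))\<^sup>2"
    proof
      fix B assume "B \<in> ?A"
      moreover have "{x \<in> ?P. B \<subseteq> ?pierced x} =
          {(U, W). pstring s U \<and> pstring s W \<and> B \<subseteq> pierced_positions s U W}"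
        by (auto simp: pstrings_def)
      ultimately show "card {x \<in> ?P. B \<subseteq> ?pierced x} = (catalan (s - k))\<^sup>2"
        by (simp add: card_pstring_pairs_pierced_at)
    qed
  qed (simp_all add: finite_pstrings finite_A_set)
  finally show ?thesis
    by (simp add: O_count_eq)
qed

theorem lemma3p3:
  fixes s k :: nat
  assumes "1 \<le> s" and "k \<le> s"
  shows "O_count s k = (2 * s - k - 1 choose k) * (catalan (s - k))\<^sup>2 \<and>
         O_count s k = (\<Sum>m = k..s. (m choose k) * E_count s m)"
  \<comment> \<open>Both identities in fact hold for all \<open>s\<close> and \<open>k\<close>.\<close>
  using O_count_eq_sum_E_count by (simp add: O_count_eq card_A_set)

end
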